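(* Let $W=e^{-q}$ be the bivariate Freud weight and $\{\mathbb{P}_n\}$ an orthonormal polynomial system for it, with matrices $G^n_k$, $G_n$, $A_{n,i}$ as in the context. Then for all $n\geqslant0$ and $i,j\in\{1,2\}$, $$A_{n,i}A_{n,j}^T+A_{n-1,i}^TA_{n-1,j}=G^n_{n-2}G_{n-2}^{-1}A_{n-2,i}A_{n-1,j}-A_{n,i}A_{n+1,j}G^{n+2}_nG_n^{-1}.$$
   Context: Parameters $a_{4,0},a_{2,2},a_{0,4}\geqslant0$, $a_{2,0},a_{0,2}\in\mathbb{R}$, $a_{4,0}+a_{2,2}>0$, $a_{2,2}+a_{0,4}>0$; $q(x,y)=a_{4,0}x^4+a_{2,2}x^2y^2+a_{0,4}y^4+a_{2,0}x^2+a_{0,2}y^2$, $W=e^{-q}$, inner product $(f,g)=\iint_{\mathbb{R}^2}fgW\,dx\,dy$ (entrywise on vectors). $\mathbb{X}_n=(x^n,x^{n-1}y,\dots,y^n)^T$. An orthonormal polynomial system: column vectors $\mathbb{P}_n=(P_{n,0},\dots,P_{n,n})^T$ of linearly independent polynomials of exact total degree $n$ with $(\mathbb{P}_n,\mathbb{P}_m^T)=\delta_{nm}I_{n+1}$. Write $\mathbb{P}_n=\sum_kG^n_k\mathbb{X}_k$ with constant $(n+1)\times(k+1)$ matrices, $G_n:=G^n_n$ invertible, convention $G^n_m=0$ for $m<0$ or $m>n$. $A_{n,i}$ ($(n+1)\times(n+2)$) are defined by $x\mathbb{P}_n=A_{n,1}\mathbb{P}_{n+1}+A_{n-1,1}^T\mathbb{P}_{n-1}$,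 $y\mathbb{P}_n=A_{n,2}\mathbb{P}_{n+1}+A_{n-1,2}^T\mathbb{P}_{n-1}$, $n\geqslant0$, $\mathbb{P}_{-1}=0$; matrices $A_{m,i}$ with $m<0$ are taken to be zero. *)

theory Defs
  imports "HOL-Analysis.Lebesgue_Measure" "Jordan_Normal_Form.Matrix"
begin

definition freud_q :: "real \<Rightarrow> real \<Rightarrow> real \<Rightarrow> real \<Rightarrow> real \<Rightarrow> real \<Rightarrow> real \<Rightarrow> real" where
  "freud_q a40 a22 a04 a20 a02 x y =
     a40 * x^4 + a22 * x^2 * y^2 + a04 * y^4 + a20 * x^2 + a02 * y^2"

definition freud_W :: "real \<Rightarrow> real \<Rightarrow> real \<Rightarrow> real \<Rightarrow> real \<Rightarrow> real \<Rightarrow> real \<Rightarrow> real" where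
  "freud_W a40 a22 a04 a20 a02 x y = exp (- freud_q a40 a22 a04 a20 a02 x y)"

definition inner_W :: "(real \<Rightarrow> real \<Rightarrow> real) \<Rightarrow> (real \<Rightarrow> real \<Rightarrow> real) \<Rightarrow> (real \<Rightarrow> real \<Rightarrow> real)
    \<Rightarrow> real" where
  "inner_W W f g = integral\<^sup>L (lborel :: (real \<times> real) measure) (\<lambda>(x, y). f x y * g x y * W x y)"

definition monvec :: "nat \<Rightarrow> real \<Rightarrow> real \<Rightarrow> real vec" where
  "monvec k x y = vec (k + 1) (\<lambda>j. x ^ (k - j) * y ^ j)"

definition Pvec :: "(nat \<Rightarrow> nat \<Rightarrow> real mat) \<Rightarrow> nat \<Rightarrow> real \<Rightarrow> real \<Rightarrow> real vec" where
  "Pvec G n x y = vec (n + 1) (\<lambda>i. \<Sum>k\<le>n. (G n k *\<^sub>v monvec k x y) $ i)"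

definition orthonormal_system :: "(real \<Rightarrow> real \<Rightarrow> real) \<Rightarrow> (nat \<Rightarrow> nat \<Rightarrow> real mat) \<Rightarrow> bool" where
  "orthonormal_system W G \<longleftrightarrow>
     (\<forall>n k. k \<le> n \<longrightarrow> G n k \<in> carrier_mat (n + 1) (k + 1)) \<and>
     (\<forall>n. invertible_mat (G n n)) \<and>
     (\<forall>n m i j. i \<le> n \<longrightarrow> j \<le> m \<longrightarrow>
        integrable (lborel :: (real \<times> real) measure)
          (\<lambda>(x, y). (Pvec G n x y $ i) * (Pvec G m x y $ j) * W x y) \<and>
        inner_W W (\<lambda>x y. Pvec G n x y $ i) (\<lambda>x y. Pvec G m x y $ j)
          = (if n = m \<and> i = j then 1 else 0))"

definition coord :: "nat \<Rightarrow> real \<Rightarrow> real \<Rightarrow> real" where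
  "coord i x y = (if i = 1 then x else y)"

definition three_term :: "(nat \<Rightarrow> nat \<Rightarrow> real mat) \<Rightarrow> (nat \<Rightarrow> nat \<Rightarrow> real mat) \<Rightarrow> bool" where
  "three_term G A \<longleftrightarrow>
     (\<forall>n i. i \<in> {1, 2} \<longrightarrow> A n i \<in> carrier_mat (n + 1) (n + 2)) \<and>
     (\<forall>n i x y. i \<in> {1, 2} \<longrightarrow>
        coord i x y \<cdot>\<^sub>v Pvec G n x y =
          A n i *\<^sub>v Pvec G (n + 1) x y +
          (if n = 0 then 0\<^sub>v (n + 1) else transpose_mat (A (n - 1) i) *\<^sub>v Pvec G (n - 1) x y))"

definition minv :: "real mat \<Rightarrow> real mat" where
  "minv M = (SOME B. B \<in> carrier_mat (dim_row M) (dim_row M) \<and>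
                     M * B = 1\<^sub>m (dim_row M) \<and> B * M = 1\<^sub>m (dim_row M))"

end

theory Submission
  imports Defs
begin

(*
  Comparing the coefficients of the monomial vectors X_k on both sides of the three-term relation
  x_i P_m = A_{m,i} P_{m+1} + A_{m-1,i}^T P_{m-1} gives matrix identities. With L_{k,i} the 0/1 matrix
  such that x_i X_k = L_{k,i} X_{k+1}, the coefficient of X_{m+1} gives G_m L_{m,i} = A_{m,i} G_{m+1},
  and that of X_{m-1} gives G^m_{m-2} L_{m-2,i} = A_{m,i} G^{m+1}_{m-1} + A_{m-1,i}^T G_{m-1}.
  Using the second identity for x_j P_{n+1}, the first for x_j P_{n-1} and the second again for
  x_i P_n, one finds
    (A_{n,i} A_{n,j}^T + A_{n-1,i}^T A_{n-1,j}) G_n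
      = G^n_{n-2} L_{n-2,i} L_{n-1,j} - A_{n,i} A_{n+1,j} G^{n+2}_n,
  and the first identity, applied twice, rewrites G^n_{n-2} L_{n-2,i} L_{n-1,j} as
  G^n_{n-2} G_{n-2}^{-1} A_{n-2,i} A_{n-1,j} G_n.
*)

(* The carrier_mat forms of these laws in Jordan_Normal_Form leave the inner dimension of a product
   as an unknown that simp cannot instantiate; stated with dimensions, simp solves their side
   conditions. *)
lemma assoc_mult_mat_dim:
  "dim_col A = dim_row B \<Longrightarrow> dim_col B = dim_row C \<Longrightarrow> A * B * C = A * (B * (C :: 'a :: semiring_0 mat))"
  by (rule assoc_mult_mat[OF carrier_matI carrier_matI carrier_matI]) auto

lemma add_mult_distrib_mat_dim:
  "dim_row A = dim_row B \<Longrightarrow> dim_col A = dim_col B \<Longrightarrow> dim_col A = dim_row C \<Longrightarrow>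
   (A + B) * C = A * C + B * (C :: 'a :: semiring_0 mat)"
  by (rule add_mult_distrib_mat[OF carrier_matI carrier_matI carrier_matI]) auto

lemma mult_add_distrib_mat_dim:
  "dim_row B = dim_row C \<Longrightarrow> dim_col B = dim_col C \<Longrightarrow> dim_col A = dim_row B \<Longrightarrow>
   A * (B + C) = A * B + A * (C :: 'a :: semiring_0 mat)"
  by (rule mult_add_distrib_mat[OF carrier_matI carrier_matI carrier_matI]) auto

lemma comm_add_mat_dim:
  "dim_row A = dim_row B \<Longrightarrow> dim_col A = dim_col B \<Longrightarrow> A + B = B + (A :: 'a :: comm_monoid_add mat)"
  by (rule comm_add_mat[OF carrier_matI carrier_matI]) auto

lemma assoc_add_mat_dim:
  "dim_row A = dim_row B \<Longrightarrow> dim_col A = dim_col B \<Longrightarrow>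
   dim_row B = dim_row C \<Longrightarrow> dim_col B = dim_col C \<Longrightarrow> A + B + C = A + (B + (C :: 'a :: monoid_add mat))"
  by (rule assoc_add_mat[OF carrier_matI carrier_matI carrier_matI]) auto

lemma left_commute_add_mat_dim:
  "dim_row A = dim_row B \<Longrightarrow> dim_col A = dim_col B \<Longrightarrow>
   dim_row B = dim_row C \<Longrightarrow> dim_col B = dim_col C \<Longrightarrow> A + (B + C) = B + (A + (C :: 'a :: comm_monoid_add mat))"
  by (metis assoc_add_mat_dim comm_add_mat_dim index_add_mat(2,3))

lemma add_zero_mat_dim:
  "dim_row A = nr \<Longrightarrow> dim_col A = nc \<Longrightarrow> A + 0\<^sub>m nr nc = (A :: 'a :: monoid_add mat)"
  by (rule right_add_zero_mat) auto

lemma zero_add_mat_dim: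
  "dim_row A = nr \<Longrightarrow> dim_col A = nc \<Longrightarrow> 0\<^sub>m nr nc + A = (A :: 'a :: monoid_add mat)"
  by (rule left_add_zero_mat) auto

lemmas mat_ring_dim_simps = assoc_mult_mat_dim add_mult_distrib_mat_dim mult_add_distrib_mat_dim
  assoc_add_mat_dim comm_add_mat_dim left_commute_add_mat_dim add_zero_mat_dim zero_add_mat_dim

lemma minv_inverse_mat:
  assumes "invertible_mat M" "M \<in> carrier_mat n n"
  shows "minv M \<in> carrier_mat n n" "M * minv M = 1\<^sub>m n" "minv M * M = 1\<^sub>m n"
proof -
  have n: "dim_row M = n"
    using assms(2) by auto
  obtain B where B: "M * B = 1\<^sub>m n" "B * M = 1\<^sub>m (dim_row B)"
    using assms(1) n unfolding invertible_mat_def inverts_mat_def by auto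
  have "B \<in> carrier_mat n n"
    using arg_cong[OF B(1), of dim_col] arg_cong[OF B(2), of dim_col] assms(2) by auto
  then have "B \<in> carrier_mat n n \<and> M * B = 1\<^sub>m n \<and> B * M = 1\<^sub>m n"
    using B by auto
  then have "minv M \<in> carrier_mat n n \<and> M * minv M = 1\<^sub>m n \<and> minv M * M = 1\<^sub>m n"
    unfolding minv_def n by (rule someI)
  then show "minv M \<in> carrier_mat n n" "M * minv M = 1\<^sub>m n" "minv M * M = 1\<^sub>m n"
    by auto
qed

lemma eq_minus_mult_minv:
  fixes X Y Z Q :: "real mat"
  assumes Q: "invertible_mat Q" "Q \<in> carrier_mat n n"
    and carrier: "X \<in> carrier_mat m n" "Y \<in> carrier_mat m n" "Z \<in> carrier_mat m n"
    and eq: "X * Q + Z = Y * Q"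
  shows "X = Y - Z * minv Q"
proof -
  note inv = minv_inverse_mat[OF Q]
  have XQ: "X * Q = Y * Q - Z"
  proof (rule eq_matI)
    fix a b
    assume "a < dim_row (Y * Q - Z)" "b < dim_col (Y * Q - Z)"
    then show "(X * Q) $$ (a, b) = (Y * Q - Z) $$ (a, b)"
      using arg_cong[OF eq, of "\<lambda>M. M $$ (a, b)"] carrier Q by auto
  qed (use carrier Q in auto)
  have "X = X * Q * minv Q"
    using carrier inv Q by (simp add: mat_ring_dim_simps)
  also have "\<dots> = Y - Z * minv Q"
    unfolding XQ minus_mult_distrib_mat[OF mult_carrier_mat[OF carrier(2) Q(2)] carrier(3) inv(1)]
    using carrier inv Q by (simp add: mat_ring_dim_simps)
  finally show ?thesis .
qed

(* T1, T2, T3 are the coefficients of x_j P_{n+1} at X_n, of x_j P_{n-1} at X_n and of x_i P_n at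
   X_{n-1}; H stands for G^n_{n-2} L_{n-2,i}. *)
lemma three_term_product_identity:
  fixes Ai Bj B G2 Gn Bi Aj G1 Gm L H :: "'a :: comm_ring_1 mat"
  assumes carrier: "Ai \<in> carrier_mat l m" "Bj \<in> carrier_mat m l" "B \<in> carrier_mat m n"
      "G2 \<in> carrier_mat n l" "Gn \<in> carrier_mat l l" "Bi \<in> carrier_mat l k" "Aj \<in> carrier_mat k l"
      "G1 \<in> carrier_mat m k" "Gm \<in> carrier_mat k k" "L \<in> carrier_mat k l"
    and T1: "G1 * L = B * G2 + Bj * Gn"
    and T2: "Gm * L = Aj * Gn"
    and T3: "H = Ai * G1 + Bi * Gm"
  shows "(Ai * Bj + Bi * Aj) * Gn + Ai * B * G2 = H * L"
proof -
  have "(Ai * Bj + Bi * Aj) * Gn + Ai * B * G2 = Ai * (B * G2 + Bj * Gn) + Bi * (Aj * Gn)"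
    using carrier by (simp add: mat_ring_dim_simps)
  also have "\<dots> = (Ai * G1 + Bi * Gm) * L"
    using carrier by (simp add: mat_ring_dim_simps flip: T1 T2)
  finally show ?thesis
    by (simp add: T3)
qed

definition vec_poly :: "nat \<Rightarrow> nat \<Rightarrow> (nat \<Rightarrow> real mat) \<Rightarrow> real \<Rightarrow> real \<Rightarrow> real vec" where
  "vec_poly m D C x y = vec m (\<lambda>r. \<Sum>k\<le>D. (C k *\<^sub>v monvec k x y) $ r)"

lemma dim_vec_poly [simp]: "dim_vec (vec_poly m D C x y) = m"
  by (simp add: vec_poly_def)

lemma Pvec_eq_vec_poly: "Pvec G n x y = vec_poly (n + 1) n (G n) x y"
  by (simp add: Pvec_def vec_poly_def)

lemma monvec_carrier [simp]: "monvec k x y \<in> carrier_vec (Suc k)"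
  by (simp add: monvec_def)

lemma index_mult_mat_monvec:
  assumes "M \<in> carrier_mat m (Suc k)" "r < m"
  shows "(M *\<^sub>v monvec k x y) $ r = (\<Sum>c\<le>k. M $$ (r, c) * (x ^ (k - c) * y ^ c))"
  using assms by (simp add: monvec_def scalar_prod_def atLeast0LessThan lessThan_Suc_atMost)

lemma bivariate_poly_eq_0:
  fixes d :: "nat \<Rightarrow> nat \<Rightarrow> real"
  assumes zero: "\<And>x y. (\<Sum>k\<le>D. \<Sum>c\<le>k. d k c * (x ^ (k - c) * y ^ c)) = 0"
    and "k \<le> D" "c \<le> k"
  shows "d k c = 0"
proof -
  (* substituting (x, y) = (t, t s) turns the homogeneous parts into the coefficients of t ^ k *)
  have "(\<Sum>k\<le>D. (\<Sum>c\<le>k. d k c * s ^ c) * t ^ k) = 0" for s t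
  proof -
    have "t ^ k = t ^ (k - c) * t ^ c" if "c \<le> k" for k c
      using that by (simp flip: power_add)
    then have "(\<Sum>k\<le>D. (\<Sum>c\<le>k. d k c * s ^ c) * t ^ k)
        = (\<Sum>k\<le>D. \<Sum>c\<le>k. d k c * (t ^ (k - c) * (t * s) ^ c))"
      by (auto simp: sum_distrib_right power_mult_distrib intro!: sum.cong)
    then show ?thesis
      using zero by simp
  qed
  then have "(\<Sum>c\<le>k. d k c * s ^ c) = 0" for s
    using polyfun_eq_0[of "\<lambda>k. \<Sum>c\<le>k. d k c * s ^ c" D] \<open>k \<le> D\<close> by blast
  then show ?thesis
    using polyfun_eq_0[of "d k" k] \<open>c \<le> k\<close> by blast
qed

lemma vec_poly_coeffs_eq:
  assumes C: "\<And>k. k \<le> D \<Longrightarrow> C k \<in> carrier_mat m (Suc k)"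
    and C': "\<And>k. k \<le> D \<Longrightarrow> C' k \<in> carrier_mat m (Suc k)"
    and eq: "\<And>x y. vec_poly m D C x y = vec_poly m D C' x y"
    and "k \<le> D"
  shows "C k = C' k"
proof (rule eq_matI)
  fix r c
  assume "r < dim_row (C' k)" "c < dim_col (C' k)"
  then have r: "r < m" and c: "c \<le> k"
    using C'[OF \<open>k \<le> D\<close>] by auto
  have expand: "(\<Sum>k\<le>D. (B k *\<^sub>v monvec k x y) $ r)
      = (\<Sum>k\<le>D. \<Sum>c\<le>k. B k $$ (r, c) * (x ^ (k - c) * y ^ c))"
    if "\<And>k. k \<le> D \<Longrightarrow> B k \<in> carrier_mat m (Suc k)" for B x y
    using that r by (auto intro!: sum.cong index_mult_mat_monvec)
  have vanish: "(\<Sum>k\<le>D. \<Sum>c\<le>k. (C k $$ (r, c) - C' k $$ (r, c)) * (x ^ (k - c) * y ^ c)) = 0" for x y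
    using arg_cong[OF eq, of "\<lambda>v. v $ r"] r expand[OF C] expand[OF C']
    by (simp add: vec_poly_def left_diff_distrib sum_subtractf)
  show "C k $$ (r, c) = C' k $$ (r, c)"
    using bivariate_poly_eq_0[OF vanish \<open>k \<le> D\<close> c] by simp
qed (use C[OF \<open>k \<le> D\<close>] C'[OF \<open>k \<le> D\<close>] in auto)

lemma mult_mat_vec_poly:
  assumes M: "M \<in> carrier_mat m' m" and C: "\<And>k. k \<le> D \<Longrightarrow> C k \<in> carrier_mat m (Suc k)"
  shows "M *\<^sub>v vec_poly m D C x y = vec_poly m' D (\<lambda>k. M * C k) x y"
proof (rule eq_vecI)
  fix r
  assume "r < dim_vec (vec_poly m' D (\<lambda>k. M * C k) x y)"
  then have r: "r < m'" by simp
  have "(M *\<^sub>v vec_poly m D C x y) $ r = (\<Sum>l<m. M $$ (r, l) * (\<Sum>k\<le>D. (C k *\<^sub>v monvec k x y) $ l))"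
    using M r by (simp add: scalar_prod_def vec_poly_def atLeast0LessThan)
  also have "\<dots> = (\<Sum>k\<le>D. \<Sum>l<m. M $$ (r, l) * (C k *\<^sub>v monvec k x y) $ l)"
    by (simp add: sum_distrib_left sum.swap[of _ "{..<m}"])
  also have "\<dots> = (\<Sum>k\<le>D. (M *\<^sub>v (C k *\<^sub>v monvec k x y)) $ r)"
  proof (rule sum.cong)
    fix k
    assume "k \<in> {..D}"
    then have "C k \<in> carrier_mat m (Suc k)"
      using C by simp
    then show "(\<Sum>l<m. M $$ (r, l) * (C k *\<^sub>v monvec k x y) $ l) = (M *\<^sub>v (C k *\<^sub>v monvec k x y)) $ r"
      using M r by (simp add: scalar_prod_def atLeast0LessThan)
  qed simp
  also have "\<dots> = (\<Sum>k\<le>D. ((M * C k) *\<^sub>v monvec k x y) $ r)"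
    using assoc_mult_mat_vec[OF M C monvec_carrier] by simp
  finally show "(M *\<^sub>v vec_poly m D C x y) $ r = vec_poly m' D (\<lambda>k. M * C k) x y $ r"
    using r by (simp add: vec_poly_def)
qed (use M in simp)

lemma add_vec_poly:
  assumes C: "\<And>k. k \<le> D \<Longrightarrow> C k \<in> carrier_mat m (Suc k)"
    and C': "\<And>k. k \<le> D \<Longrightarrow> C' k \<in> carrier_mat m (Suc k)"
  shows "vec_poly m D C x y + vec_poly m D C' x y = vec_poly m D (\<lambda>k. C k + C' k) x y"
proof (rule eq_vecI)
  fix r
  assume "r < dim_vec (vec_poly m D (\<lambda>k. C k + C' k) x y)"
  then have "r < m" by simp
  moreover have "((C k + C' k) *\<^sub>v monvec k x y) $ r
      = (C k *\<^sub>v monvec k x y) $ r + (C' k *\<^sub>v monvec k x y) $ r" if "k \<le> D" for k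
    using add_mult_distrib_mat_vec[OF C[OF that] C'[OF that] monvec_carrier] \<open>r < m\<close> C[OF that] C'[OF that]
    by simp
  ultimately show "(vec_poly m D C x y + vec_poly m D C' x y) $ r = vec_poly m D (\<lambda>k. C k + C' k) x y $ r"
    by (simp add: vec_poly_def sum.distrib)
qed simp

lemma vec_poly_zero: "vec_poly m D (\<lambda>k. 0\<^sub>m m (Suc k)) x y = 0\<^sub>v m"
  by (rule eq_vecI) (auto simp: vec_poly_def scalar_prod_def monvec_def)

lemma vec_poly_pad:
  assumes "D \<le> D'"
  shows "vec_poly m D C x y = vec_poly m D' (\<lambda>k. if k \<le> D then C k else 0\<^sub>m m (Suc k)) x y"
proof (rule eq_vecI)
  fix r
  assume "r < dim_vec (vec_poly m D' (\<lambda>k. if k \<le> D then C k else 0\<^sub>m m (Suc k)) x y)"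
  then have "r < m" by simp
  then have "(\<Sum>k\<le>D'. ((if k \<le> D then C k else 0\<^sub>m m (Suc k)) *\<^sub>v monvec k x y) $ r)
      = (\<Sum>k\<in>{..D'} \<inter> {k. k \<le> D}. (C k *\<^sub>v monvec k x y) $ r)"
    by (simp add: sum.inter_restrict if_distrib[of "\<lambda>M. (M *\<^sub>v _) $ r"] scalar_prod_def monvec_def
        cong: if_cong)
  also have "{..D'} \<inter> {k. k \<le> D} = {..D}"
    using assms by auto
  finally show "vec_poly m D C x y $ r = vec_poly m D' (\<lambda>k. if k \<le> D then C k else 0\<^sub>m m (Suc k)) x y $ r"
    using \<open>r < m\<close> by (simp add: vec_poly_def)
qed simp

(* L_{k,i}: x X_k = [I | 0] X_{k+1} and y X_k = [0 | I] X_{k+1} *)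
definition shift_mat :: "nat \<Rightarrow> nat \<Rightarrow> real mat" where
  "shift_mat k i = mat (Suc k) (Suc (Suc k)) (\<lambda>(r, c). if c = (if i = 1 then r else Suc r) then 1 else 0)"

lemma shift_mat_carrier [simp]: "shift_mat k i \<in> carrier_mat (Suc k) (Suc (Suc k))"
  by (simp add: shift_mat_def)

lemma dim_shift_mat [simp]: "dim_row (shift_mat k i) = Suc k" "dim_col (shift_mat k i) = Suc (Suc k)"
  by (simp_all add: shift_mat_def)

lemma coord_smult_monvec: "coord i x y \<cdot>\<^sub>v monvec k x y = shift_mat k i *\<^sub>v monvec (Suc k) x y"
proof (rule eq_vecI)
  fix r
  assume "r < dim_vec (shift_mat k i *\<^sub>v monvec (Suc k) x y)"
  then have r: "r < Suc k" by (simp add: shift_mat_def)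
  have "(shift_mat k i *\<^sub>v monvec (Suc k) x y) $ r
      = (\<Sum>c\<le>Suc k. (if c = (if i = 1 then r else Suc r) then 1 else 0) * (x ^ (Suc k - c) * y ^ c))"
    using r by (subst index_mult_mat_monvec[of _ "Suc k"]) (auto simp: shift_mat_def)
  also have "\<dots> = (if i = 1 then x ^ (Suc k - r) * y ^ r else x ^ (k - r) * y ^ Suc r)"
    using r by (simp add: if_distrib[where f = "\<lambda>a. a * _"] sum.delta cong: if_cong)
  also have "\<dots> = coord i x y * (x ^ (k - r) * y ^ r)"
    using r by (auto simp: coord_def Suc_diff_le)
  finally show "(coord i x y \<cdot>\<^sub>v monvec k x y) $ r = (shift_mat k i *\<^sub>v monvec (Suc k) x y) $ r"
    using r by (simp add: monvec_def)
qed (simp add: shift_mat_def monvec_def)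

lemma coord_smult_vec_poly:
  assumes C: "\<And>k. k \<le> D \<Longrightarrow> C k \<in> carrier_mat m (Suc k)"
  shows "coord i x y \<cdot>\<^sub>v vec_poly m D C x y
     = vec_poly m (Suc D) (\<lambda>k. if k = 0 then 0\<^sub>m m 1 else C (k - 1) * shift_mat (k - 1) i) x y"
proof (rule eq_vecI)
  fix r
  assume "r < dim_vec (vec_poly m (Suc D) (\<lambda>k. if k = 0 then 0\<^sub>m m 1 else C (k - 1) * shift_mat (k - 1) i) x y)"
  then have r: "r < m" by simp
  have "coord i x y * (C k *\<^sub>v monvec k x y) $ r = ((C k * shift_mat k i) *\<^sub>v monvec (Suc k) x y) $ r"
    if "k \<le> D" for k
  proof -
    have "(C k * shift_mat k i) *\<^sub>v monvec (Suc k) x y = C k *\<^sub>v (coord i x y \<cdot>\<^sub>v monvec k x y)"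
      by (simp add: coord_smult_monvec assoc_mult_mat_vec[OF C[OF that] shift_mat_carrier])
    also have "\<dots> = coord i x y \<cdot>\<^sub>v (C k *\<^sub>v monvec k x y)"
      by (rule mult_mat_vec[OF C[OF that] monvec_carrier])
    finally show ?thesis
      using r C[OF that] by simp
  qed
  then have "(coord i x y \<cdot>\<^sub>v vec_poly m D C x y) $ r
      = (\<Sum>k\<le>D. ((C k * shift_mat k i) *\<^sub>v monvec (Suc k) x y) $ r)"
    using r by (simp add: vec_poly_def sum_distrib_left)
  also have "\<dots> = vec_poly m (Suc D) (\<lambda>k. if k = 0 then 0\<^sub>m m 1 else C (k - 1) * shift_mat (k - 1) i) x y $ r"
    using r by (simp add: vec_poly_def sum.atMost_Suc_shift scalar_prod_def monvec_def del: sum.atMost_Suc)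
  finally show "(coord i x y \<cdot>\<^sub>v vec_poly m D C x y) $ r
      = vec_poly m (Suc D) (\<lambda>k. if k = 0 then 0\<^sub>m m 1 else C (k - 1) * shift_mat (k - 1) i) x y $ r" .
qed simp

locale three_term_system =
  fixes G A :: "nat \<Rightarrow> nat \<Rightarrow> real mat"
  assumes G_carrier: "k \<le> n \<Longrightarrow> G n k \<in> carrier_mat (Suc n) (Suc k)"
    and leading_invertible: "invertible_mat (G n n)"
    and A_carrier: "i \<in> {1, 2} \<Longrightarrow> A n i \<in> carrier_mat (Suc n) (Suc (Suc n))"
    and three_term_rel: "i \<in> {1, 2} \<Longrightarrow>
      coord i x y \<cdot>\<^sub>v Pvec G n x y = A n i *\<^sub>v Pvec G (Suc n) x y +
        (if n = 0 then 0\<^sub>v (Suc n) else transpose_mat (A (n - 1) i) *\<^sub>v Pvec G (n - 1) x y)"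
begin

lemma coord_smult_Pvec:
  "coord i x y \<cdot>\<^sub>v Pvec G m x y
     = vec_poly (Suc m) (Suc m) (\<lambda>k. if k = 0 then 0\<^sub>m (Suc m) 1 else G m (k - 1) * shift_mat (k - 1) i) x y"
  using coord_smult_vec_poly[of m "G m"] G_carrier by (simp add: Pvec_eq_vec_poly cong: if_cong)

lemma A_mult_Pvec:
  assumes "i \<in> {1, 2}"
  shows "A m i *\<^sub>v Pvec G (Suc m) x y = vec_poly (Suc m) (Suc m) (\<lambda>k. A m i * G (Suc m) k) x y"
  using mult_mat_vec_poly[OF A_carrier[OF assms], of "Suc m" "G (Suc m)"] G_carrier
  by (simp add: Pvec_eq_vec_poly)

lemma transpose_A_mult_Pvec:
  assumes "i \<in> {1, 2}"
  shows "transpose_mat (A m i) *\<^sub>v Pvec G m x y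
     = vec_poly (Suc (Suc m)) (Suc (Suc m))
         (\<lambda>k. if k \<le> m then transpose_mat (A m i) * G m k else 0\<^sub>m (Suc (Suc m)) (Suc k)) x y"
proof -
  have "transpose_mat (A m i) \<in> carrier_mat (Suc (Suc m)) (Suc m)"
    using A_carrier[OF assms] by simp
  then have "transpose_mat (A m i) *\<^sub>v Pvec G m x y
      = vec_poly (Suc (Suc m)) m (\<lambda>k. transpose_mat (A m i) * G m k) x y"
    using mult_mat_vec_poly[of _ "Suc (Suc m)" "Suc m" m "G m"] G_carrier by (simp add: Pvec_eq_vec_poly)
  then show ?thesis
    using vec_poly_pad[of m "Suc (Suc m)"] by (simp cong: if_cong)
qed

lemma coeff_three_term:
  assumes i: "i \<in> {1, 2}" and "k \<le> Suc m"
  shows "(if k = 0 then 0\<^sub>m (Suc m) 1 else G m (k - 1) * shift_mat (k - 1) i)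
     = A m i * G (Suc m) k + (if k < m then transpose_mat (A (m - 1) i) * G (m - 1) k else 0\<^sub>m (Suc m) (Suc k))"
proof -
  define lower where
    "lower k = (if k < m then transpose_mat (A (m - 1) i) * G (m - 1) k else 0\<^sub>m (Suc m) (Suc k))" for k
  have lower_carrier: "lower k \<in> carrier_mat (Suc m) (Suc k)" for k
    using A_carrier[OF i, of "m - 1"] G_carrier[of k "m - 1"] by (auto simp: lower_def)
  have shifted_carrier: "(if k = 0 then 0\<^sub>m (Suc m) 1 else G m (k - 1) * shift_mat (k - 1) i)
      \<in> carrier_mat (Suc m) (Suc k)" if "k \<le> Suc m" for k
    using that G_carrier[of "k - 1" m] by (cases k) auto
  have "(if m = 0 then 0\<^sub>v (Suc m) else transpose_mat (A (m - 1) i) *\<^sub>v Pvec G (m - 1) x y)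
      = vec_poly (Suc m) (Suc m) lower x y" for x y
  proof (cases m)
    case 0
    then have "lower = (\<lambda>k. 0\<^sub>m 1 (Suc k))"
      by (simp add: lower_def fun_eq_iff)
    then show ?thesis
      using vec_poly_zero[of 1 1 x y] 0 by simp
  next
    case (Suc p)
    then have "lower = (\<lambda>k. if k \<le> p then transpose_mat (A p i) * G p k else 0\<^sub>m (Suc (Suc p)) (Suc k))"
      by (auto simp: lower_def fun_eq_iff)
    then show ?thesis
      using transpose_A_mult_Pvec[OF i, of p x y] Suc by simp
  qed
  then have "vec_poly (Suc m) (Suc m)
        (\<lambda>k. if k = 0 then 0\<^sub>m (Suc m) 1 else G m (k - 1) * shift_mat (k - 1) i) x y
      = vec_poly (Suc m) (Suc m) (\<lambda>k. A m i * G (Suc m) k + lower k) x y" for x y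
    using three_term_rel[OF i, of x y m] A_carrier[OF i, of m] G_carrier[of _ "Suc m"] lower_carrier
    by (simp add: coord_smult_Pvec A_mult_Pvec[OF i] add_vec_poly)
  then show ?thesis
    unfolding lower_def[symmetric]
    by (rule vec_poly_coeffs_eq[rotated 2])
      (use assms A_carrier[OF i, of m] G_carrier lower_carrier shifted_carrier in auto)
qed

lemma dim_G [simp]:
  assumes "k \<le> n"
  shows "dim_row (G n k) = Suc n" "dim_col (G n k) = Suc k"
  using G_carrier[OF assms] by auto

lemma dim_A [simp]:
  assumes "i \<in> {1, 2}"
  shows "dim_row (A n i) = Suc n" "dim_col (A n i) = Suc (Suc n)"
  using A_carrier[OF assms] by auto

lemma dim_minv_G [simp]: "dim_row (minv (G n n)) = Suc n" "dim_col (minv (G n n)) = Suc n"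
  using minv_inverse_mat(1)[OF leading_invertible G_carrier[OF order_refl]] by auto

lemma minv_G_mult: "minv (G n n) * G n n = 1\<^sub>m (Suc n)"
  using minv_inverse_mat(3)[OF leading_invertible G_carrier[OF order_refl]] .

lemma three_term_leading_coeff:
  assumes "i \<in> {1, 2}"
  shows "G m m * shift_mat m i = A m i * G (Suc m) (Suc m)"
  using coeff_three_term[OF assms, of "Suc m" m] A_carrier[OF assms, of m] G_carrier[of "Suc m" "Suc m"]
  by simp

lemma three_term_coeff_below:
  assumes "i \<in> {1, 2}"
  shows "(if m = 0 then 0\<^sub>m (Suc (Suc m)) 1 else G (Suc m) (m - 1) * shift_mat (m - 1) i)
     = A (Suc m) i * G (Suc (Suc m)) m + transpose_mat (A m i) * G m m"
  using coeff_three_term[OF assms, of m "Suc m"] by simp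

lemma shift_shift_via_leading:
  assumes i: "i \<in> {1, 2}" and j: "j \<in> {1, 2}"
  shows "G (Suc (Suc p)) p * shift_mat p i * shift_mat (Suc p) j
     = G (Suc (Suc p)) p * minv (G p p) * A p i * A (Suc p) j * G (Suc (Suc p)) (Suc (Suc p))"
proof -
  note dims = dim_A[OF i] dim_A[OF j]
  have "G (Suc (Suc p)) p * shift_mat p i * shift_mat (Suc p) j
      = G (Suc (Suc p)) p * (minv (G p p) * G p p) * shift_mat p i * shift_mat (Suc p) j"
    by (simp add: minv_G_mult)
  also have "\<dots> = G (Suc (Suc p)) p * minv (G p p) * (G p p * shift_mat p i) * shift_mat (Suc p) j"
    using dims by (simp add: mat_ring_dim_simps)
  also have "\<dots> = G (Suc (Suc p)) p * minv (G p p) * A p i * (G (Suc p) (Suc p) * shift_mat (Suc p) j)"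
    using dims by (simp add: three_term_leading_coeff[OF i] mat_ring_dim_simps)
  also have "\<dots> = G (Suc (Suc p)) p * minv (G p p) * A p i * A (Suc p) j * G (Suc (Suc p)) (Suc (Suc p))"
    using dims by (simp add: three_term_leading_coeff[OF j] mat_ring_dim_simps)
  finally show ?thesis .
qed

lemma A_product_recurrence_mult_leading:
  assumes i: "i \<in> {1, 2}" and j: "j \<in> {1, 2}"
  shows "(A n i * transpose_mat (A n j) +
           (if n \<ge> 1 then transpose_mat (A (n - 1) i) * A (n - 1) j else 0\<^sub>m (n + 1) (n + 1))) * G n n
         + A n i * A (n + 1) j * G (n + 2) n
       = (if n \<ge> 2 then G n (n - 2) * minv (G (n - 2) (n - 2)) * A (n - 2) i * A (n - 1) j
          else 0\<^sub>m (n + 1) (n + 1)) * G n n"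
proof -
  note dims = dim_A[OF i] dim_A[OF j]
  show ?thesis
  proof (cases n)
    case 0
    have "(A 0 i * transpose_mat (A 0 j) + 0\<^sub>m 1 1) * G 0 0 + A 0 i * A (Suc 0) j * G (Suc (Suc 0)) 0
        = A 0 i * (A (Suc 0) j * G (Suc (Suc 0)) 0 + transpose_mat (A 0 j) * G 0 0)"
      using dims by (simp add: mat_ring_dim_simps)
    also have "\<dots> = A 0 i * 0\<^sub>m (Suc (Suc 0)) 1"
      using three_term_coeff_below[OF j, of 0] by simp
    also have "\<dots> = 0\<^sub>m 1 1 * G 0 0"
      using dims by simp
    finally show ?thesis
      using 0 dims by simp
  next
    case (Suc q)
    let ?H = "if q = 0 then 0\<^sub>m (Suc (Suc q)) 1 else G (Suc q) (q - 1) * shift_mat (q - 1) i"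
    have "(A (Suc q) i * transpose_mat (A (Suc q) j) + transpose_mat (A q i) * A q j) * G (Suc q) (Suc q)
          + A (Suc q) i * A (Suc (Suc q)) j * G (Suc (Suc (Suc q))) (Suc q)
        = ?H * shift_mat q j"
      by (rule three_term_product_identity[where k = "Suc q" and l = "Suc (Suc q)"
              and m = "Suc (Suc (Suc q))" and n = "Suc (Suc (Suc (Suc q)))", OF _ _ _ _ _ _ _ _ _ _
            three_term_coeff_below[OF j, of "Suc q", simplified] three_term_leading_coeff[OF j, of q]
            three_term_coeff_below[OF i, of q]])
        (simp_all add: A_carrier[OF i] A_carrier[OF j] G_carrier)
    also have "?H * shift_mat q j = (if q = 0 then 0\<^sub>m (Suc (Suc q)) (Suc (Suc q))
        else G (Suc q) (q - 1) * minv (G (q - 1) (q - 1)) * A (q - 1) i * A q j) * G (Suc q) (Suc q)"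
      by (cases q) (simp_all add: shift_shift_via_leading[OF i j])
    finally show ?thesis
      using Suc by simp
  qed
qed

lemma A_product_recurrence:
  assumes i: "i \<in> {1, 2}" and j: "j \<in> {1, 2}"
  shows "A n i * transpose_mat (A n j) +
           (if n \<ge> 1 then transpose_mat (A (n - 1) i) * A (n - 1) j else 0\<^sub>m (n + 1) (n + 1))
         = (if n \<ge> 2 then G n (n - 2) * minv (G (n - 2) (n - 2)) * A (n - 2) i * A (n - 1) j
            else 0\<^sub>m (n + 1) (n + 1))
           - A n i * A (n + 1) j * G (n + 2) n * minv (G n n)"
  by (rule eq_minus_mult_minv[where m = "Suc n", OF leading_invertible G_carrier[OF order_refl] _ _ _
        A_product_recurrence_mult_leading[OF i j]])
    (auto intro!: carrier_matI simp: dim_A[OF i] dim_A[OF j])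

end

theorem proposition4p4:
  fixes a40 a22 a04 a20 a02 :: real
    and G :: "nat \<Rightarrow> nat \<Rightarrow> real mat"
    and A :: "nat \<Rightarrow> nat \<Rightarrow> real mat"
  assumes "a40 \<ge> 0" and "a22 \<ge> 0" and "a04 \<ge> 0"
    and "a40 + a22 > 0" and "a22 + a04 > 0"
    and "orthonormal_system (freud_W a40 a22 a04 a20 a02) G"
    and "three_term G A"
    and "i \<in> {1, 2}" and "j \<in> {1, 2}"
  shows "A n i * transpose_mat (A n j) +
           (if n \<ge> 1 then transpose_mat (A (n - 1) i) * A (n - 1) j else 0\<^sub>m (n + 1) (n + 1))
         = (if n \<ge> 2 then G n (n - 2) * minv (G (n - 2) (n - 2)) * A (n - 2) i * A (n - 1) j
            else 0\<^sub>m (n + 1) (n + 1))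
           - A n i * A (n + 1) j * G (n + 2) n * minv (G n n)"
proof -
  interpret three_term_system G A
  proof
    show "G n k \<in> carrier_mat (Suc n) (Suc k)" if "k \<le> n" for n k
      using assms(6) that unfolding orthonormal_system_def by auto
    show "invertible_mat (G n n)" for n
      using assms(6) unfolding orthonormal_system_def by auto
  qed (use assms(7) in \<open>auto simp: three_term_def cong: if_cong\<close>)
  show ?thesis
    by (rule A_product_recurrence[OF assms(8,9)])
qed

end
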